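(* Let $R$ be a finite commutative local Frobenius ring with residue field $\mathbb{F}_q$ and $|R|=q^\omega$, and let $\ell$ be a nonnegative integer. For $i=1,2$, let $C_i$ be a linear code of length $n$ over $R$ with generator matrix $\mathrm{G}_i$ and parity check matrix $\mathrm{H}_i$, and suppose $C_1+C_2=R^n$. Then $\{C_1,C_2\}$ is an $\ell$-DLIP if and only if $\texttt{Rank}_q(\mathrm{H}_2\mathrm{G}_1^\top)=\texttt{Rank}_q(\mathrm{G}_1)-\ell=n\omega-\texttt{Rank}_q(\mathrm{G}_2)$ or $\texttt{Rank}_q(\mathrm{H}_1\mathrm{G}_2^\top)=\texttt{Rank}_q(\mathrm{G}_2)-\ell=n\omega-\texttt{Rank}_q(\mathrm{G}_1)$.
   Context: A linear code of length $n$ over $R$ is an $R$-submodule of $R^n$; $\dim(C):=\log_q|C|$. A pair $\{C,D\}$ is an $\ell$-DLIP if $\dim(C\cap D)=\ell$. A generator matrix of $C$ is a matrix whose rows generate $C$; a parity check matrix is a generator matrix of $C^\perp$ with respect to the standard inner product $\sum_j u_jc_j$. For a matrix $\mathrm{A}$ over $R$, $\texttt{Rank}_q(\mathrm{A}):=\log_q|M|$ where $M$ is the $R$-submodule spanned by the rows of $\mathrm{A}$. *)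

theory Defs
  imports Complex_Main
begin

definition is_ideal :: "'a::comm_ring_1 set \<Rightarrow> bool" where
  "is_ideal I \<longleftrightarrow> 0 \<in> I \<and> (\<forall>x\<in>I. \<forall>y\<in>I. x + y \<in> I) \<and> (\<forall>r. \<forall>x\<in>I. r * x \<in> I)"

definition maximal_ideal :: "'a::comm_ring_1 set \<Rightarrow> bool" where
  "maximal_ideal M \<longleftrightarrow> is_ideal M \<and> M \<noteq> UNIV \<and>
     (\<forall>J. is_ideal J \<and> M \<subseteq> J \<longrightarrow> J = M \<or> J = UNIV)"

definition minimal_ideal :: "'a::comm_ring_1 set \<Rightarrow> bool" where
  "minimal_ideal I \<longleftrightarrow> is_ideal I \<and> I \<noteq> {0} \<and>
     (\<forall>J. is_ideal J \<and> J \<subseteq> I \<longrightarrow> J = {0} \<or> J = I)"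

definition local_ring :: "'a::comm_ring_1 itself \<Rightarrow> bool" where
  "local_ring TYPE('a) \<longleftrightarrow> (\<exists>!M::'a set. maximal_ideal M)"

definition the_max_ideal :: "'a::comm_ring_1 itself \<Rightarrow> 'a set" where
  "the_max_ideal TYPE('a) = (THE M::'a set. maximal_ideal M)"

text \<open>Socle of a local ring = annihilator of the maximal ideal (= sum of minimal ideals).
  A finite commutative local ring is Frobenius iff its socle is simple, i.e.
  the socle is a minimal ideal (equivalently, R/J(R) is isomorphic to soc(R)).\<close>
definition socle :: "'a::comm_ring_1 itself \<Rightarrow> 'a set" where
  "socle TYPE('a) = {x. \<forall>m\<in>the_max_ideal TYPE('a). x * m = 0}"

definition local_frobenius :: "'a::comm_ring_1 itself \<Rightarrow> bool" where
  "local_frobenius TYPE('a) \<longleftrightarrow> local_ring TYPE('a) \<and> minimal_ideal (socle TYPE('a))"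

definition residue_card :: "'a::comm_ring_1 itself \<Rightarrow> nat" where
  "residue_card TYPE('a) =
     card ((UNIV::'a set) // {(x,y). x - y \<in> the_max_ideal TYPE('a)})"

definition linear_code :: "('n::finite \<Rightarrow> 'a::comm_ring_1) set \<Rightarrow> bool" where
  "linear_code C \<longleftrightarrow> (\<lambda>_. 0) \<in> C \<and> (\<forall>x\<in>C. \<forall>y\<in>C. (\<lambda>j. x j + y j) \<in> C) \<and> (\<forall>r. \<forall>x\<in>C. (\<lambda>j. r * x j) \<in> C)"

definition code_dim :: "nat \<Rightarrow> ('n::finite \<Rightarrow> 'a::comm_ring_1) set \<Rightarrow> real" where
  "code_dim q C = log (real q) (real (card C))"

definition DLIP :: "nat \<Rightarrow> nat \<Rightarrow> ('n::finite \<Rightarrow> 'a::comm_ring_1) set \<Rightarrow> ('n \<Rightarrow> 'a) set \<Rightarrow> bool" where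
  "DLIP q l C D \<longleftrightarrow> code_dim q (C \<inter> D) = real l"

definition code_sum :: "('n \<Rightarrow> 'a::comm_ring_1) set \<Rightarrow> ('n \<Rightarrow> 'a) set \<Rightarrow> ('n \<Rightarrow> 'a) set" where
  "code_sum C D = {(\<lambda>j. x j + y j) |x y. x \<in> C \<and> y \<in> D}"

definition dual_code :: "('n::finite \<Rightarrow> 'a::comm_ring_1) set \<Rightarrow> ('n \<Rightarrow> 'a) set" where
  "dual_code C = {u. \<forall>c\<in>C. (\<Sum>j\<in>UNIV. u j * c j) = 0}"

definition row_span :: "('r::finite \<Rightarrow> 'c \<Rightarrow> 'a::comm_ring_1) \<Rightarrow> ('c \<Rightarrow> 'a) set" where
  "row_span A = {x. \<exists>coef::'r \<Rightarrow> 'a. x = (\<lambda>j. \<Sum>i\<in>UNIV. coef i * A i j)}"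

definition generator_matrix :: "('r::finite \<Rightarrow> 'n::finite \<Rightarrow> 'a::comm_ring_1) \<Rightarrow> ('n \<Rightarrow> 'a) set \<Rightarrow> bool" where
  "generator_matrix G C \<longleftrightarrow> row_span G = C"

definition parity_check_matrix :: "('r::finite \<Rightarrow> 'n::finite \<Rightarrow> 'a::comm_ring_1) \<Rightarrow> ('n \<Rightarrow> 'a) set \<Rightarrow> bool" where
  "parity_check_matrix H C \<longleftrightarrow> row_span H = dual_code C"

definition rank_q :: "nat \<Rightarrow> ('r::finite \<Rightarrow> 'c \<Rightarrow> 'a::comm_ring_1) \<Rightarrow> real" where
  "rank_q q A = log (real q) (real (card (row_span A)))"

definition mult_transpose :: "('r1 \<Rightarrow> 'n::finite \<Rightarrow> 'a::comm_ring_1) \<Rightarrow> ('r2 \<Rightarrow> 'n \<Rightarrow> 'a) \<Rightarrow> 'r1 \<Rightarrow> 'r2 \<Rightarrow> 'a" where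
  "mult_transpose A B = (\<lambda>i k. \<Sum>j\<in>UNIV. A i j * B k j)"

end

theory Submission
  imports Defs "HOL-Library.Function_Algebras" "HOL-Library.Product_Plus" "HOL-Library.Cardinality"
begin

(* The heart of the argument is the duality |C| |C\<^sup>\<bottom>| = |R\<^sup>n| for every linear code C over a
   finite local Frobenius ring R. If D = C + Rx covers C in the lattice of codes, the colon ideal
   {r. rx \<in> C} is the maximal ideal m, so |D| = |soc R| |C| because |R| = |soc R| |m|; and
   u \<mapsto> u \<cdot> x maps C\<^sup>\<bottom> into soc R with kernel D\<^sup>\<bottom>. Hence |C| |C\<^sup>\<bottom>| can only grow along a
   maximal chain of codes from {0} to R\<^sup>n, at both ends of which it equals |R\<^sup>n|.

   When C\<^sub>1 + C\<^sub>2 = R\<^sup>n we have |C\<^sub>1| |C\<^sub>2| = |C\<^sub>1 \<inter> C\<^sub>2| |R\<^sup>n|, and u \<mapsto> u G\<^sub>1\<^sup>T is injective on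
   C\<^sub>2\<^sup>\<bottom> (its kernel is (C\<^sub>1 + C\<^sub>2)\<^sup>\<bottom>) with image the row span of H\<^sub>2 G\<^sub>1\<^sup>T. Taking logarithms to
   base q turns these identities into linear relations between the ranks, under which both
   disjuncts say exactly that dim (C\<^sub>1 \<inter> C\<^sub>2) = \<ell>. *)

lemma card_eq_card_kernel_mult_card_image:
  fixes f :: "'b::ab_group_add \<Rightarrow> 'c::ab_group_add"
  assumes "finite A" "0 \<in> A"
    and add_closed: "\<And>x y. x \<in> A \<Longrightarrow> y \<in> A \<Longrightarrow> x + y \<in> A"
    and neg_closed: "\<And>x. x \<in> A \<Longrightarrow> - x \<in> A"
    and additive: "\<And>x y. x \<in> A \<Longrightarrow> y \<in> A \<Longrightarrow> f (x + y) = f x + f y"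
  shows "card A = card {x\<in>A. f x = 0} * card (f ` A)"
proof -
  let ?K = "{x\<in>A. f x = 0}"
  have diff: "x - a \<in> A" "f (x - a) = f x - f a" if "x \<in> A" "a \<in> A" for x a
  proof -
    show "x - a \<in> A" using add_closed[OF that(1) neg_closed[OF that(2)]] by simp
    then have "f (x - a) + f a = f x" using additive[of "x - a" a] that by simp
    then show "f (x - a) = f x - f a" by (simp add: eq_diff_eq)
  qed
  have fiber: "{x\<in>A. f x = f a} = (+) a ` ?K" if "a \<in> A" for a
  proof (intro set_eqI iffI)
    fix x assume "x \<in> {x\<in>A. f x = f a}"
    then have "x - a \<in> ?K" and "x = a + (x - a)" using diff[OF _ that] by auto
    then show "x \<in> (+) a ` ?K" by blast
  qed (use that add_closed additive in auto)
  have "card A = (\<Sum>b\<in>f ` A. card {x\<in>A. f x = b})"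
    using \<open>finite A\<close> by (subst card_UN_disjoint[symmetric]) (auto intro: arg_cong[where f = card])
  also have "\<dots> = (\<Sum>b\<in>f ` A. card ?K)"
    using fiber by (intro sum.cong) (auto simp: card_image)
  finally show ?thesis by simp
qed

lemma is_ideal_UNIV: "is_ideal (UNIV::'a::comm_ring_1 set)"
  by (simp add: is_ideal_def)

lemma is_ideal_eq_UNIV_iff:
  assumes "is_ideal I"
  shows "I = UNIV \<longleftrightarrow> 1 \<in> I"
proof
  assume "1 \<in> I"
  then have "r * 1 \<in> I" for r using assms unfolding is_ideal_def by blast
  then show "I = UNIV" by auto
qed auto

lemma is_ideal_principal: "is_ideal (range (\<lambda>r. r * s))"
  unfolding is_ideal_def
proof (intro conjI ballI allI)
  show "0 \<in> range (\<lambda>r. r * s)" by (rule range_eqI[of _ _ 0]) simp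
next
  fix x y assume "x \<in> range (\<lambda>r. r * s)" "y \<in> range (\<lambda>r. r * s)"
  then obtain a b where "x = a * s" "y = b * s" by blast
  then show "x + y \<in> range (\<lambda>r. r * s)" by (auto intro: range_eqI[of _ _ "a + b"] simp: distrib_right)
next
  fix t x assume "x \<in> range (\<lambda>r. r * s)"
  then obtain a where "x = a * s" by blast
  then show "t * x \<in> range (\<lambda>r. r * s)" by (auto intro: range_eqI[of _ _ "t * a"] simp: mult.assoc)
qed

lemma is_ideal_annihilator: "is_ideal {r. r * s = 0}"
  by (auto simp: is_ideal_def distrib_right mult.assoc)

lemma local_ring_maximal_ideal:
  "local_ring TYPE('a::comm_ring_1) \<Longrightarrow> maximal_ideal (the_max_ideal TYPE('a))"
  unfolding local_ring_def the_max_ideal_def by (rule theI')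

lemma local_ring_maximal_ideal_unique:
  "local_ring TYPE('a::comm_ring_1) \<Longrightarrow> maximal_ideal (M::'a set) \<Longrightarrow> M = the_max_ideal TYPE('a)"
  using local_ring_maximal_ideal unfolding local_ring_def by blast

lemma local_ring_is_ideal_max_ideal:
  "local_ring TYPE('a::comm_ring_1) \<Longrightarrow> is_ideal (the_max_ideal TYPE('a))"
  using local_ring_maximal_ideal unfolding maximal_ideal_def by blast

lemma local_ring_one_notin_max_ideal:
  "local_ring TYPE('a::comm_ring_1) \<Longrightarrow> (1::'a) \<notin> the_max_ideal TYPE('a)"
  using local_ring_maximal_ideal local_ring_is_ideal_max_ideal is_ideal_eq_UNIV_iff
  unfolding maximal_ideal_def by blast

lemma local_ring_ideal_eq_max_ideal:
  assumes "local_ring TYPE('a::comm_ring_1)" "is_ideal (J::'a set)"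
    and "the_max_ideal TYPE('a) \<subseteq> J" "1 \<notin> J"
  shows "J = the_max_ideal TYPE('a)"
  using assms local_ring_maximal_ideal is_ideal_eq_UNIV_iff unfolding maximal_ideal_def by blast

lemma residue_card_gt_1:
  assumes "local_ring TYPE('a::{comm_ring_1,finite})"
  shows "residue_card TYPE('a) > 1"
proof -
  let ?rel = "{(x::'a, y). x - y \<in> the_max_ideal TYPE('a)}"
  have "?rel `` {0} \<noteq> ?rel `` {1}"
  proof
    assume classes_eq: "?rel `` {0} = ?rel `` {1}"
    have "(0::'a) \<in> the_max_ideal TYPE('a)"
      using local_ring_is_ideal_max_ideal[OF assms] by (simp add: is_ideal_def)
    then have "0 \<in> ?rel `` {1}" unfolding classes_eq[symmetric] by simp
    then show False using local_ring_one_notin_max_ideal[OF assms] by simp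
  qed
  moreover have "{?rel `` {0}, ?rel `` {1}} \<subseteq> UNIV // ?rel"
    by (intro insert_subsetI empty_subsetI quotientI UNIV_I)
  ultimately have "2 \<le> card (UNIV // ?rel)"
    using card_mono[of "UNIV // ?rel" "{?rel `` {0}, ?rel `` {1}}"] by simp
  then show ?thesis unfolding residue_card_def by simp
qed

text \<open>In a local Frobenius ring, multiplication by a nonzero element s of the simple socle
  has kernel the maximal ideal and image the whole socle.\<close>
lemma card_socle_mult_card_max_ideal:
  assumes "local_frobenius TYPE('a::{comm_ring_1,finite})"
  shows "card (socle TYPE('a)) * card (the_max_ideal TYPE('a)) = CARD('a)"
proof -
  have loc: "local_ring TYPE('a)" and simple: "minimal_ideal (socle TYPE('a))"
    using assms by (auto simp: local_frobenius_def)
  then obtain s where s: "s \<in> socle TYPE('a)" "s \<noteq> 0"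
    unfolding minimal_ideal_def is_ideal_def by auto
  have "CARD('a) = card {r. r * s = 0} * card (range (\<lambda>r. r * s))"
    using card_eq_card_kernel_mult_card_image[of UNIV "\<lambda>r. r * s"] by (simp add: distrib_right)
  moreover have "{r. r * s = 0} = the_max_ideal TYPE('a)"
    using s by (intro local_ring_ideal_eq_max_ideal[OF loc is_ideal_annihilator])
      (auto simp: socle_def mult.commute)
  moreover have "range (\<lambda>r. r * s) = socle TYPE('a)"
  proof -
    have "range (\<lambda>r. r * s) \<subseteq> socle TYPE('a)"
      using s(1) by (auto simp: socle_def mult.assoc)
    moreover have "range (\<lambda>r. r * s) \<noteq> {0}"
      using s(2) by (metis mult_1 rangeI singletonD)
    ultimately show ?thesis
      using simple is_ideal_principal unfolding minimal_ideal_def by blast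
  qed
  ultimately show ?thesis by simp
qed

definition smul :: "'a::comm_ring_1 \<Rightarrow> ('n \<Rightarrow> 'a) \<Rightarrow> 'n \<Rightarrow> 'a" where
  "smul r x = (\<lambda>j. r * x j)"

definition dot :: "('n::finite \<Rightarrow> 'a::comm_ring_1) \<Rightarrow> ('n \<Rightarrow> 'a) \<Rightarrow> 'a" where
  "dot u x = (\<Sum>j\<in>UNIV. u j * x j)"

lemma smul_simps:
  "smul r (x + y) = smul r x + smul r y" "smul (r + s) x = smul r x + smul s x"
  "smul r (smul s x) = smul (r * s) x" "smul (r - s) x = smul r x - smul s x"
  "smul 1 x = x" "smul 0 x = 0" "smul r 0 = 0" "smul (- 1) x = - x"
  by (auto simp: smul_def fun_eq_iff algebra_simps)

lemma dot_simps:
  "dot u (x + y) = dot u x + dot u y" "dot (u + v) x = dot u x + dot v x"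
  "dot u (smul r x) = r * dot u x" "dot (smul r u) x = r * dot u x"
  "dot u 0 = 0" "dot 0 x = 0"
  by (auto simp: dot_def smul_def sum.distrib sum_distrib_left algebra_simps)

lemma linear_code_iff:
  "linear_code C \<longleftrightarrow> 0 \<in> C \<and> (\<forall>x\<in>C. \<forall>y\<in>C. x + y \<in> C) \<and> (\<forall>r. \<forall>x\<in>C. smul r x \<in> C)"
  by (simp add: linear_code_def smul_def plus_fun_def zero_fun_def)

lemma linear_codeI:
  assumes "0 \<in> C" "\<And>x y. x \<in> C \<Longrightarrow> y \<in> C \<Longrightarrow> x + y \<in> C" "\<And>r x. x \<in> C \<Longrightarrow> smul r x \<in> C"
  shows "linear_code C"
  using assms unfolding linear_code_iff by blast

lemma linear_codeD:
  assumes "linear_code C"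
  shows "0 \<in> C" "\<And>x y. x \<in> C \<Longrightarrow> y \<in> C \<Longrightarrow> x + y \<in> C"
    "\<And>r x. x \<in> C \<Longrightarrow> smul r x \<in> C" "\<And>x. x \<in> C \<Longrightarrow> - x \<in> C"
  using assms smul_simps(8) unfolding linear_code_iff by metis+

lemma linear_code_zero: "linear_code {0}"
  by (rule linear_codeI) (auto simp: smul_simps)

lemma linear_code_UNIV: "linear_code UNIV"
  by (rule linear_codeI) auto

lemma dual_code_eq: "dual_code C = {u. \<forall>c\<in>C. dot u c = 0}"
  by (simp add: dual_code_def dot_def)

lemma linear_code_dual_code: "linear_code (dual_code C)"
  by (rule linear_codeI) (auto simp: dual_code_eq dot_simps)

lemma dual_code_antimono: "C \<subseteq> D \<Longrightarrow> dual_code D \<subseteq> dual_code C"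
  by (auto simp: dual_code_def)

lemma dual_code_zero: "dual_code {0} = UNIV"
  by (simp add: dual_code_eq dot_simps)

lemma dual_code_UNIV: "dual_code UNIV = {0::'n::finite \<Rightarrow> 'a::comm_ring_1}"
proof -
  have "u k = 0" if "u \<in> dual_code UNIV" for u :: "'n \<Rightarrow> 'a" and k
  proof -
    have "dot u (\<lambda>j. if j = k then 1 else 0) = 0" using that by (simp add: dual_code_eq)
    then show ?thesis by (simp add: dot_def if_distrib cong: if_cong)
  qed
  then show ?thesis by (auto simp: dual_code_eq dot_simps)
qed

lemma dual_code_code_sum:
  fixes C D :: "('n::finite \<Rightarrow> 'a::comm_ring_1) set"
  assumes "0 \<in> C" "0 \<in> D"
  shows "dual_code (code_sum C D) = dual_code C \<inter> dual_code D"
proof -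
  have sum_eq: "code_sum C D = {x + y |x y. x \<in> C \<and> y \<in> D}"
    by (simp add: code_sum_def plus_fun_def)
  have "c = c + 0" "c = 0 + c" for c :: "'n \<Rightarrow> 'a" by simp_all
  then have "C \<subseteq> code_sum C D" "D \<subseteq> code_sum C D"
    unfolding sum_eq using assms by blast+
  then have "dual_code (code_sum C D) \<subseteq> dual_code C \<inter> dual_code D"
    using dual_code_antimono by blast
  moreover have "dual_code C \<inter> dual_code D \<subseteq> dual_code (code_sum C D)"
    by (auto simp: sum_eq dual_code_eq dot_simps)
  ultimately show ?thesis by (rule subset_antisym)
qed

definition code_ext :: "('n \<Rightarrow> 'a::comm_ring_1) set \<Rightarrow> 'a set \<Rightarrow> ('n \<Rightarrow> 'a) \<Rightarrow> ('n \<Rightarrow> 'a) set" where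
  "code_ext C J x = {c + smul a x |c a. c \<in> C \<and> a \<in> J}"

lemma linear_code_code_ext:
  assumes "linear_code C" "is_ideal J"
  shows "linear_code (code_ext C J x)"
proof -
  note C = linear_codeD[OF assms(1)] and J = assms(2)[unfolded is_ideal_def]
  show ?thesis
  proof (rule linear_codeI)
    have "0 = 0 + smul 0 x" by (simp add: smul_simps)
    then show "0 \<in> code_ext C J x" unfolding code_ext_def using C J by blast
  next
    fix y z assume "y \<in> code_ext C J x" "z \<in> code_ext C J x"
    then obtain c a d b where "c \<in> C" "d \<in> C" "a \<in> J" "b \<in> J"
      and "y = c + smul a x" "z = d + smul b x" unfolding code_ext_def by blast
    then have "y + z = (c + d) + smul (a + b) x" "c + d \<in> C" "a + b \<in> J"
      using C J by (auto simp: smul_simps algebra_simps)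
    then show "y + z \<in> code_ext C J x" unfolding code_ext_def by blast
  next
    fix r y assume "y \<in> code_ext C J x"
    then obtain c a where "c \<in> C" "a \<in> J" "y = c + smul a x" unfolding code_ext_def by blast
    then have "smul r y = smul r c + smul (r * a) x" "smul r c \<in> C" "r * a \<in> J"
      using C J by (auto simp: smul_simps)
    then show "smul r y \<in> code_ext C J x" unfolding code_ext_def by blast
  qed
qed

lemma code_ext_subset:
  assumes "linear_code D" "C \<subseteq> D" "x \<in> D"
  shows "code_ext C J x \<subseteq> D"
  using assms linear_codeD(2,3)[OF assms(1)] by (auto simp: code_ext_def)

lemma subset_code_ext: "0 \<in> J \<Longrightarrow> C \<subseteq> code_ext C J x"
  unfolding code_ext_def by (force simp: smul_simps)

lemma self_mem_code_ext: "0 \<in> C \<Longrightarrow> 1 \<in> J \<Longrightarrow> x \<in> code_ext C J x"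
  unfolding code_ext_def by (force simp: smul_simps)

lemma is_ideal_colon:
  assumes "linear_code C"
  shows "is_ideal {r. smul r x \<in> C}"
  using linear_codeD[OF assms] linear_codeD(3)[OF assms, of "smul _ x"]
  by (auto simp: is_ideal_def smul_simps)

definition code_covers :: "('n::finite \<Rightarrow> 'a::comm_ring_1) set \<Rightarrow> ('n \<Rightarrow> 'a) set \<Rightarrow> bool" where
  "code_covers C D \<longleftrightarrow> linear_code C \<and> linear_code D \<and> C \<subset> D \<and>
     (\<forall>E. linear_code E \<and> C \<subseteq> E \<and> E \<subseteq> D \<longrightarrow> E = C \<or> E = D)"

text \<open>The codes C + Jx for ideals J lie between C and D, so each equals C or D: for J = R this
  gives D = C + Rx, and for an ideal J above the colon ideal it forces J to be the colon ideal or R.\<close>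
lemma code_covers_code_ext:
  assumes "code_covers C D" "x \<in> D" "x \<notin> C"
  shows "D = code_ext C UNIV x" and "maximal_ideal {r. smul r x \<in> C}"
proof -
  have C: "linear_code C" and D: "linear_code D" and "C \<subseteq> D"
    and between: "\<And>E. linear_code E \<Longrightarrow> C \<subseteq> E \<Longrightarrow> E \<subseteq> D \<Longrightarrow> E = C \<or> E = D"
    using assms(1) unfolding code_covers_def by blast+
  have ext_cases: "code_ext C J x = C \<or> code_ext C J x = D" if "is_ideal J" for J
    using that C D \<open>C \<subseteq> D\<close> assms(2)
    by (intro between linear_code_code_ext subset_code_ext code_ext_subset) (auto simp: is_ideal_def)
  have x_ext: "x \<in> code_ext C UNIV x"
    using C by (simp add: self_mem_code_ext linear_codeD)
  then show D_eq: "D = code_ext C UNIV x"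
    using ext_cases[OF is_ideal_UNIV] assms(3) by blast
  let ?I = "{r. smul r x \<in> C}"
  show "maximal_ideal ?I"
    unfolding maximal_ideal_def
  proof (intro conjI allI impI)
    show I: "is_ideal ?I" using C by (rule is_ideal_colon)
    show "?I \<noteq> UNIV"
    proof
      assume "?I = UNIV"
      then have "smul 1 x \<in> C" by blast
      then show False using assms(3) by (simp add: smul_simps)
    qed
    fix J assume J: "is_ideal J \<and> ?I \<subseteq> J"
    show "J = ?I \<or> J = UNIV"
    proof (cases "code_ext C J x = C")
      case True
      have "smul a x \<in> code_ext C J x" if "a \<in> J" for a
        using that linear_codeD(1)[OF C] unfolding code_ext_def by force
      then have "J \<subseteq> ?I" using True by auto
      then show ?thesis using J by blast
    next
      case False
      then have "x \<in> code_ext C J x" using ext_cases J assms(2) by blast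
      then obtain c a where "c \<in> C" "a \<in> J" and x_eq: "x = c + smul a x"
        unfolding code_ext_def by blast
      have "smul (1 - a) x = x - smul a x" by (simp add: smul_simps)
      also have "\<dots> = c" by (rule diff_eq_eq[THEN iffD2, OF x_eq])
      finally have "smul (1 - a) x \<in> C" using \<open>c \<in> C\<close> by simp
      then have "(1 - a) + a \<in> J" using J \<open>a \<in> J\<close> unfolding is_ideal_def by blast
      then show ?thesis using J is_ideal_eq_UNIV_iff by auto
    qed
  qed
qed

lemma card_code_ext_mult_card_colon:
  fixes C :: "('n::finite \<Rightarrow> 'a::{comm_ring_1,finite}) set"
  assumes "linear_code C"
  shows "card (code_ext C UNIV x) * card {r. smul r x \<in> C} = CARD('a) * card C"
proof -
  note C = linear_codeD[OF assms]
  let ?A = "(UNIV::'a set) \<times> C" and ?f = "\<lambda>(r, c). smul r x + c"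
  let ?K = "{p\<in>?A. ?f p = 0}"
  have "card ?A = card ?K * card (?f ` ?A)"
    using C by (intro card_eq_card_kernel_mult_card_image)
      (auto simp: zero_prod_def plus_prod_def uminus_prod_def smul_simps algebra_simps)
  moreover have "?f ` ?A = code_ext C UNIV x"
    unfolding code_ext_def by (force simp: add.commute)
  moreover have "bij_betw fst ?K {r. smul r x \<in> C}"
  proof (rule bij_betw_imageI)
    show "inj_on fst ?K" by (auto simp: inj_on_def add_eq_0_iff2)
    show "fst ` ?K = {r. smul r x \<in> C}"
    proof (intro set_eqI iffI)
      fix r assume "r \<in> fst ` ?K"
      then obtain c where "c \<in> C" "smul r x = - c" by (force simp: eq_neg_iff_add_eq_0)
      then show "r \<in> {r. smul r x \<in> C}" using C by simp
    next
      fix r assume "r \<in> {r. smul r x \<in> C}"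
      then have "(r, - smul r x) \<in> ?K" using C by simp
      then show "r \<in> fst ` ?K" by force
    qed
  qed
  ultimately show ?thesis
    by (simp add: card_cartesian_product bij_betw_same_card mult.commute)
qed

lemma card_dual_code_le_code_ext:
  fixes C :: "('n::finite \<Rightarrow> 'a::{comm_ring_1,finite}) set"
  assumes "linear_code C" and max_ideal_colon: "the_max_ideal TYPE('a) \<subseteq> {r. smul r x \<in> C}"
  shows "card (dual_code C) \<le> card (dual_code (code_ext C UNIV x)) * card (socle TYPE('a))"
proof -
  let ?g = "\<lambda>u. dot u x"
  note dual = linear_codeD[OF linear_code_dual_code[of C]]
  have "card (dual_code C) = card {u\<in>dual_code C. ?g u = 0} * card (?g ` dual_code C)"
    using dual by (intro card_eq_card_kernel_mult_card_image) (auto simp: dot_simps)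
  moreover have "{u\<in>dual_code C. ?g u = 0} = dual_code (code_ext C UNIV x)"
  proof
    show "{u\<in>dual_code C. ?g u = 0} \<subseteq> dual_code (code_ext C UNIV x)"
      by (auto simp: code_ext_def dual_code_eq dot_simps)
    show "dual_code (code_ext C UNIV x) \<subseteq> {u\<in>dual_code C. ?g u = 0}"
    proof
      fix u assume u: "u \<in> dual_code (code_ext C UNIV x)"
      have "C \<subseteq> code_ext C UNIV x" "x \<in> code_ext C UNIV x"
        using linear_codeD(1)[OF assms(1)] by (simp_all add: subset_code_ext self_mem_code_ext)
      then show "u \<in> {u\<in>dual_code C. ?g u = 0}"
        using u dual_code_antimono by (auto simp: dual_code_eq)
    qed
  qed
  moreover have "?g ` dual_code C \<subseteq> socle TYPE('a)"
  proof
    fix y assume "y \<in> ?g ` dual_code C"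
    then obtain u where u: "u \<in> dual_code C" "y = dot u x" by blast
    have "y * m = 0" if "m \<in> the_max_ideal TYPE('a)" for m
    proof -
      have "y * m = dot u (smul m x)" using u(2) by (simp add: dot_simps mult.commute)
      also have "\<dots> = 0" using u(1) that max_ideal_colon by (auto simp: dual_code_eq)
      finally show ?thesis .
    qed
    then show "y \<in> socle TYPE('a)" by (simp add: socle_def)
  qed
  then have "card (?g ` dual_code C) \<le> card (socle TYPE('a))" by (intro card_mono) auto
  ultimately show ?thesis by simp
qed

lemma card_mult_card_dual_code_le_cover:
  fixes C D :: "('n::finite \<Rightarrow> 'a::{comm_ring_1,finite}) set"
  assumes frob: "local_frobenius TYPE('a)" and cover: "code_covers C D"
  shows "card C * card (dual_code C) \<le> card D * card (dual_code D)"
proof -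
  let ?M = "the_max_ideal TYPE('a)" and ?S = "socle TYPE('a)"
  have loc: "local_ring TYPE('a)" using frob by (simp add: local_frobenius_def)
  obtain x where x: "x \<in> D" "x \<notin> C" using cover unfolding code_covers_def by blast
  have C: "linear_code C" using cover by (simp add: code_covers_def)
  have D_eq: "D = code_ext C UNIV x" and colon: "{r. smul r x \<in> C} = ?M"
    using code_covers_code_ext[OF cover x] local_ring_maximal_ideal_unique[OF loc] by auto
  have "card D * card ?M = card ?S * card ?M * card C"
    using card_code_ext_mult_card_colon[OF C, of x] card_socle_mult_card_max_ideal[OF frob]
    by (simp add: D_eq colon)
  moreover have "?M \<noteq> {}"
    using local_ring_is_ideal_max_ideal[OF loc] by (auto simp: is_ideal_def)
  ultimately have card_D: "card D = card ?S * card C" by simp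
  have "card (dual_code C) \<le> card (dual_code D) * card ?S"
    using card_dual_code_le_code_ext[OF C, of x] by (simp add: D_eq colon)
  then have "card C * card (dual_code C) \<le> card C * (card (dual_code D) * card ?S)" by simp
  also have "\<dots> = card D * card (dual_code D)" by (simp add: card_D)
  finally show ?thesis .
qed

lemma code_covers_exists:
  fixes C D :: "('n::finite \<Rightarrow> 'a::{comm_ring_1,finite}) set"
  assumes "linear_code C" "linear_code D" "C \<subset> D"
  shows "\<exists>E. code_covers C E \<and> E \<subseteq> D"
proof -
  let ?P = "{E. linear_code E \<and> C \<subset> E \<and> E \<subseteq> D}"
  have "D \<in> ?P" using assms(2,3) by blast
  then obtain E where E: "E \<in> ?P" and minimal: "\<forall>F\<in>?P. F \<subseteq> E \<longrightarrow> E = F"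
    using finite_has_minimal2[of ?P D] by auto
  have "code_covers C E"
    unfolding code_covers_def
  proof (intro conjI allI impI)
    fix F assume F: "linear_code F \<and> C \<subseteq> F \<and> F \<subseteq> E"
    show "F = C \<or> F = E"
    proof (cases "F = C")
      case False
      then have "F \<in> ?P" using F E by auto
      then show ?thesis using minimal F by blast
    qed simp
  qed (use E assms(1) in auto)
  then show ?thesis using E by blast
qed

lemma card_mult_card_dual_code_mono:
  fixes C D :: "('n::finite \<Rightarrow> 'a::{comm_ring_1,finite}) set"
  assumes frob: "local_frobenius TYPE('a)" and "linear_code C" "linear_code D" "C \<subseteq> D"
  shows "card C * card (dual_code C) \<le> card D * card (dual_code D)"
  using assms(2-4)
proof (induction "card D - card C" arbitrary: C rule: less_induct)
  case less
  show ?case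
  proof (cases "C = D")
    case False
    then obtain E where cover: "code_covers C E" and "E \<subseteq> D"
      using code_covers_exists less.prems by blast
    have "card C < card E" using cover by (simp add: code_covers_def psubset_card_mono)
    moreover have "card E \<le> card D" using \<open>E \<subseteq> D\<close> by (simp add: card_mono)
    moreover have "linear_code E" using cover by (simp add: code_covers_def)
    ultimately have "card E * card (dual_code E) \<le> card D * card (dual_code D)"
      using less.hyps less.prems(2) \<open>E \<subseteq> D\<close> by simp
    then show ?thesis
      using card_mult_card_dual_code_le_cover[OF frob cover] by linarith
  qed simp
qed

theorem card_mult_card_dual_code:
  fixes C :: "('n::finite \<Rightarrow> 'a::{comm_ring_1,finite}) set"
  assumes frob: "local_frobenius TYPE('a)" and "linear_code C"
  shows "card C * card (dual_code C) = CARD('n \<Rightarrow> 'a)"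
proof -
  have "CARD('n \<Rightarrow> 'a) \<le> card C * card (dual_code C)"
    using card_mult_card_dual_code_mono[OF frob linear_code_zero assms(2)] linear_codeD(1)[OF assms(2)]
    by (simp add: dual_code_zero)
  moreover have "card C * card (dual_code C) \<le> CARD('n \<Rightarrow> 'a)"
    using card_mult_card_dual_code_mono[OF frob assms(2) linear_code_UNIV]
    by (simp add: dual_code_UNIV)
  ultimately show ?thesis by linarith
qed

lemma code_sum_commute:
  fixes C D :: "('n \<Rightarrow> 'a::comm_ring_1) set"
  shows "code_sum C D = code_sum D C"
proof -
  have "(\<lambda>j. x j + y j) = (\<lambda>j. y j + x j)" for x y :: "'n \<Rightarrow> 'a"
    by (simp add: add.commute)
  then show ?thesis unfolding code_sum_def by blast
qed

lemma card_code_sum_mult_card_Int: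
  fixes C D :: "('n::finite \<Rightarrow> 'a::{comm_ring_1,finite}) set"
  assumes "linear_code C" "linear_code D"
  shows "card (code_sum C D) * card (C \<inter> D) = card C * card D"
proof -
  note C = linear_codeD[OF assms(1)] and D = linear_codeD[OF assms(2)]
  let ?A = "C \<times> D" and ?f = "\<lambda>(x, y). x + y"
  let ?K = "{p\<in>?A. ?f p = 0}"
  have "card ?A = card ?K * card (?f ` ?A)"
    using C D by (intro card_eq_card_kernel_mult_card_image)
      (auto simp: zero_prod_def plus_prod_def uminus_prod_def algebra_simps)
  moreover have "?f ` ?A = code_sum C D"
    unfolding code_sum_def by (force simp: plus_fun_def)
  moreover have "bij_betw fst ?K (C \<inter> D)"
  proof (rule bij_betw_imageI)
    show "inj_on fst ?K" by (auto simp: inj_on_def add_eq_0_iff2)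
    show "fst ` ?K = C \<inter> D"
    proof (intro set_eqI iffI)
      fix x assume "x \<in> fst ` ?K"
      then obtain y where "x \<in> C" "y \<in> D" "x = - y" by (force simp: add_eq_0_iff2)
      then show "x \<in> C \<inter> D" using D by simp
    next
      fix x assume "x \<in> C \<inter> D"
      then have "(x, - x) \<in> ?K" using D by simp
      then show "x \<in> fst ` ?K" by force
    qed
  qed
  ultimately show ?thesis
    by (simp add: card_cartesian_product bij_betw_same_card mult.commute)
qed

lemma dot_row_comb_left: "dot (\<lambda>j. \<Sum>i\<in>UNIV. c i * A i j) x = (\<Sum>i\<in>UNIV. c i * dot (A i) x)"
  unfolding dot_def sum_distrib_left sum_distrib_right by (subst sum.swap) (simp add: mult.assoc)

lemma dot_row_comb_right: "dot u (\<lambda>j. \<Sum>i\<in>UNIV. c i * A i j) = (\<Sum>i\<in>UNIV. c i * dot u (A i))"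
  unfolding dot_def sum_distrib_left by (subst sum.swap) (simp add: mult.left_commute)

lemma row_span_eq_range: "row_span A = range (\<lambda>c j. \<Sum>i\<in>UNIV. c i * A i j)"
  by (auto simp: row_span_def)

lemma row_span_mult_transpose:
  "row_span (mult_transpose H G) = (\<lambda>u k. dot u (G k)) ` row_span H"
proof -
  have "mult_transpose H G = (\<lambda>i k. dot (H i) (G k))"
    by (simp add: mult_transpose_def dot_def)
  then show ?thesis
    by (simp add: row_span_eq_range image_image dot_row_comb_left)
qed

lemma dual_code_row_spanI: "(\<And>k. dot u (A k) = 0) \<Longrightarrow> u \<in> dual_code (row_span A)"
  by (auto simp: dual_code_eq row_span_def dot_row_comb_right)

lemma card_row_span_mult_transpose:
  fixes G :: "'r::finite \<Rightarrow> 'n::finite \<Rightarrow> 'a::{comm_ring_1,finite}" and H :: "'s::finite \<Rightarrow> 'n \<Rightarrow> 'a"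
  assumes "linear_code C" "linear_code D" "generator_matrix G C" "parity_check_matrix H D"
    and "code_sum C D = UNIV"
  shows "card (row_span (mult_transpose H G)) = card (dual_code D)"
proof -
  let ?f = "\<lambda>u k. dot u (G k)"
  note dual = linear_codeD[OF linear_code_dual_code[of D]]
  have "card (dual_code D) = card {u\<in>dual_code D. ?f u = 0} * card (?f ` dual_code D)"
    using dual by (intro card_eq_card_kernel_mult_card_image) (auto simp: dot_simps fun_eq_iff)
  moreover have "{u\<in>dual_code D. ?f u = 0} = {0}"
  proof -
    have "{u\<in>dual_code D. ?f u = 0} \<subseteq> dual_code C \<inter> dual_code D"
      using assms(3) dual_code_row_spanI by (auto simp: generator_matrix_def fun_eq_iff)
    also have "\<dots> = {0}"
      using assms(1,2,5) dual_code_code_sum dual_code_UNIV linear_codeD(1) by metis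
    finally show ?thesis using dual by (auto simp: dot_simps fun_eq_iff)
  qed
  moreover have "?f ` dual_code D = row_span (mult_transpose H G)"
    using assms(4) by (simp add: parity_check_matrix_def row_span_mult_transpose)
  ultimately show ?thesis by simp
qed

lemma log_eq_of_mult_eq:
  fixes a b c q k :: nat
  assumes "1 < q" "0 < a" "0 < b" "0 < c" "a * b = c * q ^ k"
  shows "log q a + log q b = log q c + k"
proof -
  have "log q (real a * real b) = log q (real c * real q ^ k)"
    using assms(5) by (metis of_nat_mult of_nat_power)
  then show ?thesis using assms(1-4) by (simp add: log_mult_pos)
qed

theorem corollary3p12:
  fixes C1 C2 :: "('n::finite \<Rightarrow> 'a::{comm_ring_1,finite}) set"
    and G1 :: "'r1::finite \<Rightarrow> 'n \<Rightarrow> 'a" and G2 :: "'r2::finite \<Rightarrow> 'n \<Rightarrow> 'a"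
    and H1 :: "'s1::finite \<Rightarrow> 'n \<Rightarrow> 'a" and H2 :: "'s2::finite \<Rightarrow> 'n \<Rightarrow> 'a"
    and q w l :: nat
  assumes "local_frobenius TYPE('a)"
    and "q = residue_card TYPE('a)"
    and "card (UNIV::'a set) = q ^ w"
    and "linear_code C1" and "linear_code C2"
    and "generator_matrix G1 C1" and "parity_check_matrix H1 C1"
    and "generator_matrix G2 C2" and "parity_check_matrix H2 C2"
    and "code_sum C1 C2 = UNIV"
  shows "DLIP q l C1 C2 \<longleftrightarrow>
    (rank_q q (mult_transpose H2 G1) = rank_q q G1 - real l \<and>
     rank_q q G1 - real l = real (card (UNIV::'n set) * w) - rank_q q G2) \<or>
    (rank_q q (mult_transpose H1 G2) = rank_q q G2 - real l \<and>
     rank_q q G2 - real l = real (card (UNIV::'n set) * w) - rank_q q G1)"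
proof -
  let ?L = "\<lambda>X::('n \<Rightarrow> 'a) set. log q (card X)" and ?nw = "CARD('n) * w"
  have q: "1 < q" using assms(1,2) residue_card_gt_1[where 'a = 'a] by (simp add: local_frobenius_def)
  have "CARD('n \<Rightarrow> 'a) = (q ^ w) ^ CARD('n)"
    using assms(3) by (simp add: card_fun)
  then have card_space: "CARD('n \<Rightarrow> 'a) = 1 * q ^ ?nw"
    by (simp only: power_mult[symmetric] mult.commute[of w] mult_1)
  have pos: "0 < card X" if "0 \<in> X" for X :: "('n \<Rightarrow> 'a) set"
    using that by (auto simp: card_gt_0_iff)
  have zero: "0 \<in> C1" "0 \<in> C2" "0 \<in> dual_code C1" "0 \<in> dual_code C2"
    using linear_codeD(1) assms(4,5) linear_code_dual_code by blast+
  have "card C1 * card C2 = card (C1 \<inter> C2) * q ^ ?nw"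
    using card_code_sum_mult_card_Int[OF assms(4,5)] assms(10) card_space by (simp add: mult.commute)
  then have "?L C1 + ?L C2 = ?L (C1 \<inter> C2) + ?nw"
    using zero by (intro log_eq_of_mult_eq q pos) auto
  moreover have "?L C2 + ?L (dual_code C2) = ?nw"
    using log_eq_of_mult_eq[OF q pos pos _ card_mult_card_dual_code[OF assms(1,5), unfolded card_space]]
      zero by simp
  moreover have "?L C1 + ?L (dual_code C1) = ?nw"
    using log_eq_of_mult_eq[OF q pos pos _ card_mult_card_dual_code[OF assms(1,4), unfolded card_space]]
      zero by simp
  moreover have "rank_q q (mult_transpose H2 G1) = ?L (dual_code C2)"
    using card_row_span_mult_transpose[OF assms(4,5,6,9,10)] by (simp add: rank_q_def)
  moreover have "rank_q q (mult_transpose H1 G2) = ?L (dual_code C1)"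
    using card_row_span_mult_transpose[OF assms(5,4,8,7)] assms(10)
    by (simp add: rank_q_def code_sum_commute[of C2])
  moreover have "rank_q q G1 = ?L C1" "rank_q q G2 = ?L C2"
    using assms(6,8) by (simp_all add: rank_q_def generator_matrix_def)
  ultimately show ?thesis unfolding DLIP_def code_dim_def by linarith
qed

end
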